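(* For every real $\eta > -1$, $$ \frac{15\pi}{32} = \frac{ {}_{3}F_{2}\!\!\left[ \begin{matrix} -\tfrac{3}{2},1,-\eta \\ \tfrac{7}{2},2+\eta \end{matrix} \ \Bigg| \ -1 \right] }{ {}_{3}F_{2}\!\!\left[ \begin{matrix} -\tfrac{3}{2},\tfrac{1}{2},1+\eta \\ 1,2+\eta \end{matrix} \ \Bigg| \ 1 \right]}.$$
   Context: ${}_pF_q\left[\begin{matrix} a_1,\dots,a_p\\ b_1,\dots,b_q\end{matrix}\,\Big|\, z\right] = \sum_{n\ge 0} \frac{(a_1)_n\cdots(a_p)_n}{(b_1)_n\cdots(b_q)_n}\frac{z^n}{n!}$ with $(x)_n = \Gamma(x+n)/\Gamma(x)$. *)

theory Defs
  imports Complex_Main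
begin

definition hypergeom :: "real list \<Rightarrow> real list \<Rightarrow> real \<Rightarrow> real" where
  "hypergeom as bs z =
     (\<Sum>n. (prod_list (map (\<lambda>a. pochhammer a n) as) /
            prod_list (map (\<lambda>b. pochhammer b n) bs)) * z ^ n / fact n)"

end

theory Submission
  imports Defs "HOL-Analysis.Analysis"
begin

(*
  Write B_n(x) = (-x)_n / (2+x)_n (poch_quot n x). The numerator is N(x) = sum_n a_n B_n(x) with
  a_n = (-1)^n (-3/2)_n / (7/2)_n, and the denominator is D(x+1), where D(u) = sum_k c_k u / (u+k)
  and c_k = (-3/2)_k (1/2)_k / (k!)^2.

  Telescoping each series against an explicit antidifference shows that both F = N and
  F = D(_ + 1) satisfy
    (x+7/2)(x+3/2) F(x+1) = (x+1)(x+2) F(x) + C (x+2),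
  with C = 5/4 for N and C = 2 sum_k c_k = 8/(3 pi) for D(_ + 1); the value of sum_k c_k comes from
  the closed form 4/9 n^2 (4n-7) c_n of its partial sums and the Gamma asymptotics of c_n.
  Hence N(m) = 15 pi/32 D(m+1) for every natural number m.

  The identity sum_{n<=k} (2n+1) B_n(k) B_n(x) = (k+1)(x+1)/(k+x+1) expands D(x+1) = sum_n b_n B_n(x)
  as well. Since B_n(m) = 0 for n > m while B_m(m) is nonzero, agreement at the integers forces
  a_n = 15 pi/32 b_n for all n, so N(x) = 15 pi/32 D(x+1) for every x > -1. Finally D(x+1) > 0.
*)

lemma LIMSEQ_of_nat_over_plus_const: "(\<lambda>n. real n / (z + real n)) \<longlonglongrightarrow> 1"
proof -
  have "(\<lambda>n. inverse (1 + z * inverse (real n))) \<longlonglongrightarrow> inverse (1 + z * 0)"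
    by (intro tendsto_intros lim_inverse_n) simp
  moreover have "eventually (\<lambda>n. inverse (1 + z * inverse (real n)) = real n / (z + real n)) sequentially"
    using eventually_gt_at_top[of "0::nat"] by eventually_elim (simp add: field_simps)
  ultimately show ?thesis
    by (simp add: tendsto_cong)
qed

lemma pochhammer_over_fact_asymptotic:
  fixes z :: real
  shows "(\<lambda>n. pochhammer z n / fact n * real n powr (1 - z)) \<longlonglongrightarrow> rGamma z"
proof -
  have "(\<lambda>n. rGamma_series z n * (real n / (z + real n))) \<longlonglongrightarrow> rGamma z * 1"
    by (intro tendsto_intros LIMSEQ_of_nat_over_plus_const)
  moreover have "eventually (\<lambda>n. rGamma_series z n * (real n / (z + real n))
      = pochhammer z n / fact n * real n powr (1 - z)) sequentially"
    using eventually_gt_at_top[of "nat \<lceil>\<bar>z\<bar>\<rceil>"]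
  proof eventually_elim
    case (elim n)
    then have "real n > \<bar>z\<bar>"
      by linarith
    then have "z + real n > 0" "real n > 0"
      by linarith+
    moreover have "exp (z * ln (real n)) = real n powr z"
      using \<open>real n > 0\<close> by (simp add: powr_def)
    then have "rGamma_series z n = pochhammer z n * (z + real n) / (fact n * real n powr z)"
      by (simp add: rGamma_series_def pochhammer_Suc)
    ultimately show ?case
      by (simp add: powr_diff)
  qed
  ultimately show ?thesis
    by (simp add: tendsto_cong)
qed

lemma Gamma_minus_three_halves: "Gamma (- (3/2) :: real) = 4/3 * sqrt pi"
proof -
  have "Gamma (1/2 :: real) = (-1/2) * ((-3/2) * Gamma (-3/2))"
    using Gamma_plus1[of "-1/2 :: real"] Gamma_plus1[of "-3/2 :: real"]
    by (simp add: not_in_Ints_imp_not_in_nonpos_Ints)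
  then show ?thesis
    by (simp add: Gamma_one_half_real)
qed

lemma pochhammer_5: "pochhammer (z::'a::comm_semiring_1) 5 = z * (z + 1) * (z + 2) * (z + 3) * (z + 4)"
  by (simp add: pochhammer_Suc numeral_eq_Suc algebra_simps)

lemma pochhammer_over_pochhammer_plus_1:
  fixes a :: real
  assumes "a > 0"
  shows "pochhammer a n / pochhammer (a + 1) n = a / (a + real n)"
proof -
  have "pochhammer a n * (a + real n) = a * pochhammer (a + 1) n"
    using pochhammer_Suc[of a n] pochhammer_rec[of a n] by simp
  moreover have "pochhammer (a + 1) n > 0" "a + real n > 0"
    using assms by (simp_all add: pochhammer_pos)
  ultimately show ?thesis
    by (simp add: field_simps)
qed

lemma summable_abs_mult_bounded:
  fixes a f :: "nat \<Rightarrow> real"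
  assumes "summable (\<lambda>n. \<bar>a n\<bar>)" and "\<And>n. \<bar>f n\<bar> \<le> 1"
  shows "summable (\<lambda>n. \<bar>a n * f n\<bar>)"
  by (rule summable_comparison_test'[OF assms(1), of 0])
     (simp add: abs_mult mult_left_le assms(2))

lemma has_sum_vanishing_beyond:
  fixes f :: "nat \<Rightarrow> 'a::{comm_monoid_add, topological_space}"
  assumes "\<And>n. n \<ge> N \<Longrightarrow> f n = 0"
  shows "(f has_sum (\<Sum>n<N. f n)) UNIV"
proof -
  have "(f has_sum (\<Sum>n<N. f n)) UNIV \<longleftrightarrow> (f has_sum (\<Sum>n<N. f n)) {..<N}"
    by (rule has_sum_cong_neutral) (use assms in auto)
  then show ?thesis
    by simp
qed

lemma infsum_eq_suminf:
  fixes f :: "nat \<Rightarrow> 'a::banach"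
  assumes "summable (\<lambda>n. norm (f n))"
  shows "infsum f UNIV = suminf f"
  using norm_summable_imp_has_sum[OF assms summable_sums[OF summable_norm_cancel[OF assms]]]
  by (rule infsumI)

lemma sum_odd_lessThan: "(\<Sum>n<Suc k. 2 * real n + 1) = (real k + 1) ^ 2"
  by (induction k) (simp_all add: power2_eq_square algebra_simps)

section \<open>Pochhammer quotients\<close>

definition poch_quot :: "nat \<Rightarrow> real \<Rightarrow> real" where
  "poch_quot n x = pochhammer (-x) n / pochhammer (2 + x) n"

lemma pochhammer_two_plus_pos: "x > -1 \<Longrightarrow> pochhammer (2 + x) n > (0::real)"
  by (rule pochhammer_pos) simp

lemma poch_quot_0 [simp]: "poch_quot 0 x = 1"
  by (simp add: poch_quot_def)

lemma poch_quot_Suc: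
  "x > -1 \<Longrightarrow> poch_quot (Suc n) x = poch_quot n x * (real n - x) / (real n + 2 + x)"
  using pochhammer_two_plus_pos[of x n] by (simp add: poch_quot_def pochhammer_Suc field_simps)

lemma abs_poch_quot_le_1:
  assumes "x > -1"
  shows "\<bar>poch_quot n x\<bar> \<le> 1"
proof (induction n)
  case (Suc n)
  have "\<bar>real n - x\<bar> \<le> real n + 2 + x"
    using assms by linarith
  then have "\<bar>(real n - x) / (real n + 2 + x)\<bar> \<le> 1"
    using assms by (simp add: abs_divide divide_le_eq_1)
  with Suc.IH have "\<bar>poch_quot n x\<bar> * \<bar>(real n - x) / (real n + 2 + x)\<bar> \<le> 1 * 1"
    by (intro mult_mono) simp_all
  then show ?case
    using poch_quot_Suc[OF assms, of n] by (simp add: abs_mult)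
qed simp

lemma poch_quot_of_nat_eq_0: "m < n \<Longrightarrow> poch_quot n (real m) = 0"
  by (simp add: poch_quot_def pochhammer_of_nat_eq_0_lemma)

lemma poch_quot_of_nat_self_ne_0: "poch_quot n (real n) \<noteq> 0"
  using pochhammer_two_plus_pos[of "real n" n] by (auto simp: poch_quot_def pochhammer_eq_0_iff)

lemma poch_quot_Suc_shift:
  assumes "x > -1"
  shows "poch_quot (Suc m) (x + 1) =
    - (x + 1) * (x + 2) * poch_quot m x / ((real m + 2 + x) * (real m + 3 + x))"
proof -
  have num: "pochhammer (- (x + 1)) (Suc m) = - (x + 1) * pochhammer (- x) m"
    by (simp add: pochhammer_rec)
  have den: "pochhammer (2 + (x + 1)) (Suc m) = pochhammer (3 + x) m * (real m + 3 + x)"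
    by (simp add: pochhammer_Suc add_ac)
  have "(2 + x) * pochhammer (3 + x) m = pochhammer (2 + x) m * (real m + 2 + x)"
    using pochhammer_rec[of "2 + x" m] pochhammer_Suc[of "2 + x" m] by (simp add: add_ac)
  then have shift: "pochhammer (3 + x) m = pochhammer (2 + x) m * (real m + 2 + x) / (2 + x)"
    using assms by (simp add: field_simps)
  show ?thesis
    using assms pochhammer_two_plus_pos[OF assms, of m]
    unfolding poch_quot_def num den shift by (simp add: field_simps)
qed

lemma poch_quot_product_step:
  assumes x: "x > -1" and y: "y > -1"
  shows "(real n + 1 + y) * (real n + 1 + x) * poch_quot n y * poch_quot n x
       - (real n + 2 + y) * (real n + 2 + x) * poch_quot (Suc n) y * poch_quot (Suc n) x
       = (2 * real n + 1) * (x + y + 1) * poch_quot n y * poch_quot n x"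
proof -
  have "real n + 2 + x \<noteq> 0" "real n + 2 + y \<noteq> 0"
    using x y by linarith+
  then have "(real n + 2 + y) * (real n + 2 + x) * poch_quot (Suc n) y * poch_quot (Suc n) x
      = (real n - y) * (real n - x) * poch_quot n y * poch_quot n x"
    unfolding poch_quot_Suc[OF x] poch_quot_Suc[OF y] by simp
  then show ?thesis
    by (simp add: algebra_simps)
qed

lemma sum_poch_quot_of_nat:
  assumes x: "x > -1"
  shows "(\<Sum>n<Suc k. (2 * real n + 1) * poch_quot n (real k) * poch_quot n x)
       = (real k + 1) * (x + 1) / (real k + x + 1)"
proof -
  define W where "W n = (real n + 1 + real k) * (real n + 1 + x) * poch_quot n (real k) * poch_quot n x"
    for n
  have "(\<Sum>n<Suc k. (2 * real n + 1) * poch_quot n (real k) * poch_quot n x) * (x + real k + 1)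
      = (\<Sum>n<Suc k. (2 * real n + 1) * (x + real k + 1) * poch_quot n (real k) * poch_quot n x)"
    unfolding sum_distrib_right by (rule sum.cong) (simp_all add: mult_ac)
  also have "\<dots> = (\<Sum>n<Suc k. W n - W (Suc n))"
    unfolding W_def of_nat_Suc
    by (rule sum.cong) (use poch_quot_product_step[OF x, of "real k"] in \<open>simp_all add: add_ac\<close>)
  also have "\<dots> = W 0 - W (Suc k)"
    by (rule sum_lessThan_telescope')
  also have "\<dots> = (real k + 1) * (x + 1)"
    by (simp add: W_def poch_quot_of_nat_eq_0 add_ac)
  finally show ?thesis
    using x by (simp add: field_simps)
qed

section \<open>The numerator series\<close>

definition num_coeff :: "nat \<Rightarrow> real" where
  "num_coeff n = pochhammer (-3/2) n / pochhammer (7/2) n * (-1) ^ n"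

definition num_series :: "real \<Rightarrow> real" where
  "num_series x = (\<Sum>n. num_coeff n * poch_quot n x)"

lemma num_coeff_Suc: "num_coeff (Suc n) = - num_coeff n * (real n - 3/2) / (real n + 7/2)"
  unfolding num_coeff_def pochhammer_Suc by (simp add: add.commute)

lemma num_coeff_eq: "num_coeff n = 45/32 * (-1) ^ n / pochhammer (real n - 3/2) 5"
proof -
  have "pochhammer (-3/2) n * pochhammer (real n - 3/2) 5 = pochhammer (-3/2) 5 * pochhammer (7/2::real) n"
    using pochhammer_product'[of "-3/2::real" n 5] pochhammer_product'[of "-3/2::real" 5 n]
    by (simp add: add.commute)
  moreover have "pochhammer (-3/2) 5 = (45/32 :: real)"
    by (simp add: pochhammer_Suc numeral_eq_Suc)
  moreover have "pochhammer (real n - 3/2) 5 \<noteq> 0"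
  proof
    assume "pochhammer (real n - 3/2) 5 = 0"
    then obtain k where "real n - 3/2 = - real k"
      by (auto simp: pochhammer_eq_0_iff)
    then have "real (2 * n + 2 * k) = real 3"
      by simp
    then show False
      by (simp only: of_nat_eq_iff) presburger
  qed
  moreover have "pochhammer (7/2::real) n > 0"
    by (rule pochhammer_pos) simp
  ultimately show ?thesis
    unfolding num_coeff_def by (simp add: field_simps)
qed

lemma pochhammer_shifted_five_ge:
  assumes "n \<ge> 2"
  shows "real n ^ 2 \<le> pochhammer (real n - 3/2) 5"
proof -
  have n: "real n \<ge> 2"
    using assms by simp
  have "1 * real n ^ 2 \<le> ((real n - 3/2) * (real n - 1/2) * (real n + 5/2)) * ((real n + 1/2) * (real n + 3/2))"
  proof (rule mult_mono)
    have "1/2 * 1 * 2 \<le> (real n - 3/2) * (real n - 1/2) * (real n + 5/2)"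
      using n by (intro mult_mono) auto
    then show "1 \<le> (real n - 3/2) * (real n - 1/2) * (real n + 5/2)"
      by simp
    show "real n ^ 2 \<le> (real n + 1/2) * (real n + 3/2)"
      using n by (simp add: power2_eq_square algebra_simps)
  qed (use n in auto)
  also have "\<dots> = pochhammer (real n - 3/2) 5"
    unfolding pochhammer_5 by algebra
  finally show ?thesis
    by simp
qed

lemma summable_abs_num_coeff: "summable (\<lambda>n. \<bar>num_coeff n\<bar>)"
proof (rule summable_comparison_test')
  show "summable (\<lambda>n. 45/32 * inverse (real n ^ 2))"
    by (intro summable_mult inverse_power_summable) simp
  fix n :: nat
  assume "n \<ge> 2"
  then have le: "real n ^ 2 \<le> pochhammer (real n - 3/2) 5" and pos: "real n ^ 2 > 0"
    by (simp_all add: pochhammer_shifted_five_ge)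
  then have P: "pochhammer (real n - 3/2) 5 > 0"
    by linarith
  then have "\<bar>num_coeff n\<bar> = 45/32 / pochhammer (real n - 3/2) 5"
    unfolding num_coeff_eq by (simp add: abs_mult abs_divide)
  also have "\<dots> \<le> 45/32 / real n ^ 2"
    using le pos P by (simp add: frac_le)
  also have "\<dots> = 45/32 * inverse (real n ^ 2)"
    by (rule divide_inverse)
  finally show "norm \<bar>num_coeff n\<bar> \<le> 45/32 * inverse (real n ^ 2)"
    by simp
qed

lemma summable_num_terms: "x > -1 \<Longrightarrow> summable (\<lambda>n. \<bar>num_coeff n * poch_quot n x\<bar>)"
  by (intro summable_abs_mult_bounded summable_abs_num_coeff abs_poch_quot_le_1)

lemma num_coeff_tendsto_0: "num_coeff \<longlonglongrightarrow> 0"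
  using summable_LIMSEQ_zero[OF summable_abs_num_coeff] by (simp add: tendsto_rabs_zero_iff)

definition num_antidiff :: "real \<Rightarrow> nat \<Rightarrow> real" where
  "num_antidiff x n = (if n = 0 then - 5/4 * (x + 2)
     else (x + 2) * (x + 1) * (real n + 5/2) * num_coeff n * poch_quot (n - 1) x / (2 * (x + real n + 1)))"

lemma num_antidiff_Suc:
  "num_antidiff x (Suc n) =
    (x + 2) * (x + 1) * (real n + 7/2) * num_coeff (Suc n) * poch_quot n x / (2 * (real n + 2 + x))"
  by (simp add: num_antidiff_def algebra_simps)

lemma num_antidiff_step:
  assumes x: "x > -1"
  shows "num_antidiff x (Suc n) - num_antidiff x n =
    (x + 7/2) * (x + 3/2) * (num_coeff n * poch_quot n (x + 1)) - (x + 1) * (x + 2) * (num_coeff n * poch_quot n x)"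
proof (cases n)
  case 0
  have "x + 2 > 0"
    using x by simp
  with 0 show ?thesis
    by (simp add: num_antidiff_def num_coeff_Suc num_coeff_def poch_quot_def field_simps)
next
  case (Suc m)
  define v where "v = num_coeff (Suc m)"
  define b where "b = poch_quot m x"
  define K where "K = (x + 1) * (x + 2) * v * b / (2 * (real m + 2 + x) * (real m + 3 + x))"
  have coeff: "(real m + 9/2) * num_coeff (Suc (Suc m)) = - v * (real m - 1/2)"
    unfolding v_def num_coeff_Suc[of "Suc m"] by (simp add: field_simps)
  have at_x: "poch_quot (Suc m) x = b * (real m - x) / (real m + 2 + x)"
    unfolding b_def poch_quot_Suc[OF x] ..
  have at_x1: "poch_quot (Suc m) (x + 1) = - (x + 1) * (x + 2) * b / ((real m + 2 + x) * (real m + 3 + x))"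
    unfolding b_def poch_quot_Suc_shift[OF x] ..
  have pos: "real m + 2 + x > 0" "real m + 3 + x > 0" "2 * (real m + 2 + x) * (real m + 3 + x) > 0"
    using x by auto
  have "num_antidiff x (Suc n) =
      (x + 2) * (x + 1) * ((real m + 9/2) * num_coeff (Suc (Suc m))) * poch_quot (Suc m) x / (2 * (real m + 3 + x))"
    unfolding num_antidiff_Suc Suc by (simp add: algebra_simps)
  also have "\<dots> = - K * ((real m - 1/2) * (real m - x))"
    unfolding coeff at_x K_def using pos by (simp add: field_simps)
  finally have z1: "num_antidiff x (Suc n) = - K * ((real m - 1/2) * (real m - x))" .
  have z0: "num_antidiff x n = K * ((real m + 7/2) * (real m + 3 + x))"
    unfolding num_antidiff_Suc Suc v_def[symmetric] b_def[symmetric] K_def using pos by (simp add: field_simps)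
  have t1: "(x + 7/2) * (x + 3/2) * (num_coeff n * poch_quot n (x + 1)) = - K * (2 * (x + 7/2) * (x + 3/2))"
    unfolding Suc at_x1 v_def[symmetric] K_def using pos by (simp add: field_simps)
  have t2: "(x + 1) * (x + 2) * (num_coeff n * poch_quot n x) = K * (2 * (real m - x) * (real m + 3 + x))"
    unfolding Suc at_x v_def[symmetric] K_def using pos by (simp add: field_simps)
  show ?thesis
    unfolding z1 z0 t1 t2 by algebra
qed

lemma num_antidiff_tendsto_0:
  assumes x: "x > -1"
  shows "num_antidiff x \<longlonglongrightarrow> 0"
proof (rule Lim_null_comparison)
  show "eventually (\<lambda>n. norm (num_antidiff x n) \<le> 2 * (x + 2) * (x + 1) * \<bar>num_coeff n\<bar>) sequentially"
    using eventually_ge_at_top[of "1::nat"]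
  proof eventually_elim
    case (elim n)
    have "x + real n + 1 > 0"
      using x by simp
    then have ratio: "(real n + 5/2) / (2 * (x + real n + 1)) \<le> 2"
      using elim x by (simp add: divide_le_eq)
    have "norm (num_antidiff x n)
        = (x + 2) * (x + 1) * \<bar>num_coeff n\<bar> * \<bar>poch_quot (n - 1) x\<bar> * ((real n + 5/2) / (2 * (x + real n + 1)))"
      using elim x \<open>x + real n + 1 > 0\<close> by (simp add: num_antidiff_def abs_mult abs_divide)
    also have "\<dots> \<le> (x + 2) * (x + 1) * \<bar>num_coeff n\<bar> * 1 * 2"
      using x ratio abs_poch_quot_le_1[OF x, of "n - 1"] by (intro mult_mono mult_left_mono) auto
    finally show ?case
      by (simp add: algebra_simps)
  qed
  show "(\<lambda>n. 2 * (x + 2) * (x + 1) * \<bar>num_coeff n\<bar>) \<longlonglongrightarrow> 0"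
    using tendsto_mult_right_zero[OF iffD2[OF tendsto_rabs_zero_iff num_coeff_tendsto_0]] by simp
qed

lemma num_series_recurrence:
  assumes x: "x > -1"
  shows "(x + 7/2) * (x + 3/2) * num_series (x + 1) = (x + 1) * (x + 2) * num_series x + 5/4 * (x + 2)"
proof -
  have "x + 1 > -1"
    using x by simp
  note summable_at = summable_rabs_cancel[OF summable_num_terms]
  have "(\<lambda>n. (x + 7/2) * (x + 3/2) * (num_coeff n * poch_quot n (x + 1)) - (x + 1) * (x + 2) * (num_coeff n * poch_quot n x))
      sums ((x + 7/2) * (x + 3/2) * num_series (x + 1) - (x + 1) * (x + 2) * num_series x)"
    unfolding num_series_def
    by (intro sums_diff sums_mult summable_sums summable_at[OF x] summable_at[OF \<open>x + 1 > -1\<close>])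
  moreover have "(\<lambda>n. num_antidiff x (Suc n) - num_antidiff x n) sums (0 - num_antidiff x 0)"
    by (rule telescope_sums[OF num_antidiff_tendsto_0[OF x]])
  ultimately have "(x + 7/2) * (x + 3/2) * num_series (x + 1) - (x + 1) * (x + 2) * num_series x = 0 - num_antidiff x 0"
    unfolding num_antidiff_step[OF x] by (rule sums_unique2)
  then show ?thesis
    by (simp add: num_antidiff_def field_simps)
qed

lemma num_series_of_nat: "num_series (real m) = (\<Sum>n<Suc m. num_coeff n * poch_quot n (real m))"
  unfolding num_series_def by (rule suminf_finite) (auto simp: poch_quot_of_nat_eq_0)

lemma hypergeom_eq_num_series:
  assumes x: "x > -1"
  shows "hypergeom [-3/2, 1, -x] [7/2, 2 + x] (-1) = num_series x"
  unfolding hypergeom_def num_series_def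
proof (rule suminf_cong)
  fix n
  have "pochhammer (7/2) n > (0::real)"
    by (rule pochhammer_pos) simp
  with pochhammer_two_plus_pos[OF x, of n]
  show "prod_list (map (\<lambda>a. pochhammer a n) [-3/2, 1, -x]) / prod_list (map (\<lambda>b. pochhammer b n) [7/2, 2 + x]) * (-1) ^ n / fact n
      = num_coeff n * poch_quot n x"
    unfolding num_coeff_def poch_quot_def by (simp add: pochhammer_fact[symmetric] field_simps)
qed

section \<open>The denominator series\<close>

definition den_coeff :: "nat \<Rightarrow> real" where
  "den_coeff k = pochhammer (-3/2) k * pochhammer (1/2) k / (fact k)^2"

definition den_series :: "real \<Rightarrow> real" where
  "den_series u = (\<Sum>k. den_coeff k * (u / (u + real k)))"

lemma den_coeff_0 [simp]: "den_coeff 0 = 1"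
  by (simp add: den_coeff_def)

lemma den_coeff_Suc: "den_coeff (Suc k) = den_coeff k * (real k - 3/2) * (real k + 1/2) / (real k + 1)^2"
  unfolding den_coeff_def pochhammer_Suc fact_Suc by (simp add: add.commute power2_eq_square mult_ac)

lemma sum_den_coeff_lessThan: "(\<Sum>k<n. den_coeff k) = 4/9 * real n ^ 2 * (4 * real n - 7) * den_coeff n"
proof (induction n)
  case (Suc n)
  have "(real n + 1)^2 > 0"
    by simp
  then show ?case
    unfolding sum.lessThan_Suc Suc.IH den_coeff_Suc of_nat_Suc by (simp add: field_simps power2_eq_square)
qed simp

lemma den_coeff_asymptotic: "(\<lambda>n. real n ^ 3 * den_coeff n) \<longlonglongrightarrow> 3 / (4 * pi)"
proof -
  have "(\<lambda>n. (pochhammer (-3/2) n / fact n * real n powr (1 - (-3/2))) * (pochhammer (1/2) n / fact n * real n powr (1 - 1/2)))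
      \<longlonglongrightarrow> rGamma (-3/2) * rGamma (1/2)"
    by (intro tendsto_mult pochhammer_over_fact_asymptotic)
  moreover have "rGamma (-3/2) * rGamma (1/2 :: real) = 3 / (4 * pi)"
  proof -
    have "inverse (4/3 * s) * inverse s = 3 / (4 * (s * s))" for s :: real
      by (simp add: field_simps)
    from this[of "sqrt pi"] show ?thesis
      by (simp add: rGamma_inverse_Gamma Gamma_minus_three_halves Gamma_one_half_real)
  qed
  moreover have "eventually (\<lambda>n. (pochhammer (-3/2) n / fact n * real n powr (1 - (-3/2))) * (pochhammer (1/2) n / fact n * real n powr (1 - 1/2))
      = real n ^ 3 * den_coeff n) sequentially"
    using eventually_gt_at_top[of "0::nat"]
  proof eventually_elim
    case (elim n)
    have "real n powr (5/2) * real n powr (1/2) = real n powr (real 3)"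
      by (simp flip: powr_add)
    also have "\<dots> = real n ^ 3"
      using elim by (simp add: powr_realpow)
    finally have "real n ^ 3 = real n powr (5/2) * real n powr (1/2)" ..
    moreover have "1 - (-3/2) = (5/2::real)" "1 - 1/2 = (1/2::real)"
      by simp_all
    ultimately show ?case
      unfolding den_coeff_def by (simp only: divide_inverse power2_eq_square inverse_mult_distrib mult_ac)
  qed
  ultimately show ?thesis
    by (simp add: tendsto_cong)
qed

lemma den_coeff_sums: "den_coeff sums (4 / (3 * pi))"
proof -
  have "(\<lambda>n. 4/9 * (4 - 7 * inverse (real n)) * (real n ^ 3 * den_coeff n)) \<longlonglongrightarrow> 4/9 * (4 - 7 * 0) * (3 / (4 * pi))"
    by (intro tendsto_intros lim_inverse_n den_coeff_asymptotic)
  moreover have "eventually (\<lambda>n. 4/9 * (4 - 7 * inverse (real n)) * (real n ^ 3 * den_coeff n) = (\<Sum>k<n. den_coeff k)) sequentially"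
    using eventually_gt_at_top[of "0::nat"]
    by eventually_elim (simp add: sum_den_coeff_lessThan field_simps power2_eq_square power3_eq_cube)
  ultimately show ?thesis
    unfolding sums_def by (simp add: tendsto_cong)
qed

lemma summable_den_coeff_weighted: "summable (\<lambda>k. \<bar>den_coeff k\<bar> * (real k + 1))"
proof -
  obtain B where B: "\<And>k. \<bar>real k ^ 3 * den_coeff k\<bar> \<le> B"
    using convergent_imp_Bseq[OF convergentI[OF den_coeff_asymptotic]] unfolding Bseq_def by auto
  show ?thesis
  proof (rule summable_comparison_test')
    show "summable (\<lambda>k. 2 * B * inverse (real k ^ 2))"
      by (intro summable_mult inverse_power_summable) simp
    fix k :: nat
    assume "k \<ge> 1"
    then have k: "real k \<ge> 1"
      by simp
    have "\<bar>den_coeff k\<bar> * (real k + 1) \<le> \<bar>den_coeff k\<bar> * (2 * real k)"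
      using k by (intro mult_left_mono) auto
    also have "\<dots> = 2 * \<bar>real k ^ 3 * den_coeff k\<bar> * inverse (real k ^ 2)"
      using k by (simp add: abs_mult power2_eq_square power3_eq_cube field_simps)
    also have "\<dots> \<le> 2 * B * inverse (real k ^ 2)"
      using B[of k] by (intro mult_right_mono) auto
    finally show "norm (\<bar>den_coeff k\<bar> * (real k + 1)) \<le> 2 * B * inverse (real k ^ 2)"
      by simp
  qed
qed

lemma summable_abs_den_coeff: "summable (\<lambda>k. \<bar>den_coeff k\<bar>)"
  by (rule summable_comparison_test'[OF summable_den_coeff_weighted, of 0]) (simp add: mult_le_cancel_left1)

lemma den_coeff_weighted_tendsto_0: "(\<lambda>k. den_coeff k * real k) \<longlonglongrightarrow> 0"
  by (rule Lim_null_comparison[OF _ summable_LIMSEQ_zero[OF summable_den_coeff_weighted]])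
     (auto simp: abs_mult intro!: always_eventually mult_left_mono)

lemma summable_den_terms:
  assumes "u \<ge> 0"
  shows "summable (\<lambda>k. \<bar>den_coeff k * (u / (u + real k))\<bar>)"
proof (intro summable_abs_mult_bounded summable_abs_den_coeff)
  show "\<bar>u / (u + real k)\<bar> \<le> 1" for k
    by (cases "u + real k = 0") (use assms in \<open>simp_all add: abs_divide divide_le_eq_1\<close>)
qed

definition den_antidiff :: "real \<Rightarrow> nat \<Rightarrow> real" where
  "den_antidiff u k = (u + 1) * den_coeff k * real k ^ 2 / (u + real k)"

lemma den_antidiff_step:
  assumes u: "u \<ge> 0"
  shows "den_antidiff u (Suc k) - den_antidiff u k =
    (u + 5/2) * (u + 1/2) * (den_coeff k * ((u + 1) / (u + 1 + real k)))
    - u * (u + 1) * (den_coeff k * (u / (u + real k))) - 2 * (u + 1) * den_coeff k"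
proof (cases "u + real k = 0")
  case True
  then have "u = 0" "k = 0"
    using u by auto
  then show ?thesis
    by (simp add: den_antidiff_def den_coeff_Suc)
next
  case False
  then have A: "u + real k > 0" "u + 1 + real k > 0" "(u + real k) * (u + 1 + real k) > 0"
    using u by simp_all
  define K where "K = (u + 1) * den_coeff k / ((u + real k) * (u + 1 + real k))"
  have coeff: "den_coeff (Suc k) * (real k + 1) ^ 2 = den_coeff k * (real k - 3/2) * (real k + 1/2)"
    by (simp add: den_coeff_Suc)
  have "den_antidiff u (Suc k) = (u + 1) * (den_coeff (Suc k) * (real k + 1) ^ 2) / (u + 1 + real k)"
    by (simp add: den_antidiff_def algebra_simps)
  also have "\<dots> = K * ((real k - 3/2) * (real k + 1/2) * (u + real k))"
    unfolding coeff K_def using A by (simp add: field_simps)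
  finally have z1: "den_antidiff u (Suc k) = K * ((real k - 3/2) * (real k + 1/2) * (u + real k))" .
  have z0: "den_antidiff u k = K * (real k ^ 2 * (u + 1 + real k))"
    unfolding den_antidiff_def K_def using A by (simp add: field_simps)
  have rhs: "(u + 5/2) * (u + 1/2) * (den_coeff k * ((u + 1) / (u + 1 + real k)))
      - u * (u + 1) * (den_coeff k * (u / (u + real k))) - 2 * (u + 1) * den_coeff k
      = K * ((u + 5/2) * (u + 1/2) * (u + real k) - u * u * (u + 1 + real k) - 2 * (u + real k) * (u + 1 + real k))"
    unfolding K_def using A u by (simp add: field_simps)
  show ?thesis
    unfolding z1 z0 rhs by algebra
qed

lemma den_antidiff_tendsto_0:
  assumes u: "u \<ge> 0"
  shows "den_antidiff u \<longlonglongrightarrow> 0"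
proof (rule Lim_null_comparison)
  show "eventually (\<lambda>k. norm (den_antidiff u k) \<le> (u + 1) * \<bar>den_coeff k * real k\<bar>) sequentially"
    using eventually_gt_at_top[of "0::nat"]
  proof eventually_elim
    case (elim k)
    then have "u + real k > 0"
      using u by simp
    then have ratio: "0 \<le> real k / (u + real k)" "real k / (u + real k) \<le> 1"
      using u by (simp_all add: divide_le_eq)
    have "den_antidiff u k = (u + 1) * (den_coeff k * real k) * (real k / (u + real k))"
      by (simp add: den_antidiff_def power2_eq_square)
    then have "norm (den_antidiff u k) = (u + 1) * \<bar>den_coeff k * real k\<bar> * (real k / (u + real k))"
      using u ratio by (simp add: abs_mult)
    also have "\<dots> \<le> (u + 1) * \<bar>den_coeff k * real k\<bar> * 1"
      using u ratio by (intro mult_left_mono) auto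
    finally show ?case
      by simp
  qed
  show "(\<lambda>k. (u + 1) * \<bar>den_coeff k * real k\<bar>) \<longlonglongrightarrow> 0"
    using tendsto_mult_right_zero[OF iffD2[OF tendsto_rabs_zero_iff den_coeff_weighted_tendsto_0]] by simp
qed

lemma den_series_recurrence:
  assumes u: "u \<ge> 0"
  shows "(u + 5/2) * (u + 1/2) * den_series (u + 1) = u * (u + 1) * den_series u + 8 * (u + 1) / (3 * pi)"
proof -
  have "u + 1 \<ge> 0"
    using u by simp
  note summable_at = summable_rabs_cancel[OF summable_den_terms]
  have "(\<lambda>k. (u + 5/2) * (u + 1/2) * (den_coeff k * ((u + 1) / (u + 1 + real k)))
      - u * (u + 1) * (den_coeff k * (u / (u + real k))) - 2 * (u + 1) * den_coeff k)
      sums ((u + 5/2) * (u + 1/2) * den_series (u + 1) - u * (u + 1) * den_series u - 2 * (u + 1) * (4 / (3 * pi)))"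
    unfolding den_series_def
    by (intro sums_diff sums_mult den_coeff_sums summable_sums summable_at[OF u] summable_at[OF \<open>u + 1 \<ge> 0\<close>])
  moreover have "(\<lambda>k. den_antidiff u (Suc k) - den_antidiff u k) sums (0 - den_antidiff u 0)"
    by (rule telescope_sums[OF den_antidiff_tendsto_0[OF u]])
  ultimately have "(u + 5/2) * (u + 1/2) * den_series (u + 1) - u * (u + 1) * den_series u - 2 * (u + 1) * (4 / (3 * pi))
      = 0 - den_antidiff u 0"
    unfolding den_antidiff_step[OF u] by (rule sums_unique2)
  then show ?thesis
    by (simp add: den_antidiff_def)
qed

lemma den_coeff_nonneg: "k \<ge> 2 \<Longrightarrow> den_coeff k \<ge> 0"
proof (induction k rule: dec_induct)
  case base
  show ?case
    by (simp add: numeral_2_eq_2 den_coeff_Suc)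
next
  case (step k)
  then show ?case
    by (simp add: den_coeff_Suc)
qed

lemma den_series_pos:
  assumes u: "u > 0"
  shows "den_series u > 0"
proof -
  have S: "summable (\<lambda>k. den_coeff k * (u / (u + real k)))"
    using summable_rabs_cancel[OF summable_den_terms] u by simp
  have "den_series u = (\<Sum>k. den_coeff (k + 2) * (u / (u + real (k + 2)))) + (\<Sum>k<2. den_coeff k * (u / (u + real k)))"
    unfolding den_series_def by (rule suminf_split_initial_segment[OF S])
  moreover have "(\<Sum>k. den_coeff (k + 2) * (u / (u + real (k + 2)))) \<ge> 0"
  proof (rule suminf_nonneg)
    show "summable (\<lambda>k. den_coeff (k + 2) * (u / (u + real (k + 2))))"
      using summable_ignore_initial_segment[OF S, of 2] .
    show "0 \<le> den_coeff (k + 2) * (u / (u + real (k + 2)))" for k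
      using u by (intro mult_nonneg_nonneg den_coeff_nonneg) auto
  qed
  moreover have "(\<Sum>k<2. den_coeff k * (u / (u + real k))) = 1 - 3/4 * (u / (u + 1))"
    using u by (simp add: numeral_2_eq_2 den_coeff_Suc)
  moreover have "u / (u + 1) < 1"
    using u by simp
  ultimately show ?thesis
    by linarith
qed

lemma hypergeom_eq_den_series:
  assumes x: "x > -1"
  shows "hypergeom [-3/2, 1/2, 1 + x] [1, 2 + x] 1 = den_series (x + 1)"
  unfolding hypergeom_def den_series_def
proof (rule suminf_cong)
  fix n
  have "prod_list (map (\<lambda>a. pochhammer a n) [-3/2, 1/2, 1 + x]) / prod_list (map (\<lambda>b. pochhammer b n) [1, 2 + x]) * 1 ^ n / fact n
      = den_coeff n * (pochhammer (x + 1) n / pochhammer (x + 1 + 1) n)"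
    unfolding den_coeff_def by (simp add: pochhammer_fact[symmetric] power2_eq_square add_ac mult_ac)
  also have "\<dots> = den_coeff n * ((x + 1) / (x + 1 + real n))"
    using x by (subst pochhammer_over_pochhammer_plus_1) simp_all
  finally show "prod_list (map (\<lambda>a. pochhammer a n) [-3/2, 1/2, 1 + x]) / prod_list (map (\<lambda>b. pochhammer b n) [1, 2 + x]) * 1 ^ n / fact n
      = den_coeff n * ((x + 1) / (x + 1 + real n))" .
qed

section \<open>Expansion of the denominator in Pochhammer quotients\<close>

definition expansion_term :: "real \<Rightarrow> nat \<Rightarrow> nat \<Rightarrow> real" where
  "expansion_term x k n = den_coeff k * (2 * real n + 1) * poch_quot n (real k) * poch_quot n x / (real k + 1)"

definition expansion_coeff :: "nat \<Rightarrow> real" where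
  "expansion_coeff n = infsum (\<lambda>k. den_coeff k * (2 * real n + 1) * poch_quot n (real k) / (real k + 1)) UNIV"

lemma expansion_term_eq_0: "n \<ge> Suc k \<Longrightarrow> expansion_term x k n = 0"
  by (simp add: expansion_term_def poch_quot_of_nat_eq_0)

lemma has_sum_expansion_term_row:
  assumes x: "x > -1"
  shows "(expansion_term x k has_sum den_coeff k * ((x + 1) / (x + 1 + real k))) UNIV"
proof -
  have "(\<Sum>n<Suc k. expansion_term x k n)
      = den_coeff k / (real k + 1) * (\<Sum>n<Suc k. (2 * real n + 1) * poch_quot n (real k) * poch_quot n x)"
    unfolding expansion_term_def sum_distrib_left by (rule sum.cong) simp_all
  also have "\<dots> = den_coeff k * ((x + 1) / (x + 1 + real k))"
    unfolding sum_poch_quot_of_nat[OF x] by (simp add: add_ac)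
  finally show ?thesis
    using has_sum_vanishing_beyond[of "Suc k" "expansion_term x k"] expansion_term_eq_0 by simp
qed

lemma summable_on_expansion_term:
  assumes x: "x > -1"
  shows "(\<lambda>(k, n). expansion_term x k n) summable_on UNIV \<times> UNIV"
proof -
  have row: "((\<lambda>n. norm (expansion_term x k n)) has_sum (\<Sum>n<Suc k. norm (expansion_term x k n))) UNIV" for k
    by (rule has_sum_vanishing_beyond) (simp add: expansion_term_eq_0)
  have row_bound: "(\<Sum>n<Suc k. norm (expansion_term x k n)) \<le> \<bar>den_coeff k\<bar> * (real k + 1)" for k
  proof -
    have "(\<Sum>n<Suc k. norm (expansion_term x k n)) \<le> (\<Sum>n<Suc k. \<bar>den_coeff k\<bar> / (real k + 1) * (2 * real n + 1))"
    proof (rule sum_mono)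
      fix n
      have "\<bar>poch_quot n (real k)\<bar> * \<bar>poch_quot n x\<bar> \<le> 1 * 1"
        using abs_poch_quot_le_1[OF x] abs_poch_quot_le_1[of "real k"] by (intro mult_mono) auto
      then have "\<bar>den_coeff k\<bar> / (real k + 1) * (2 * real n + 1) * (\<bar>poch_quot n (real k)\<bar> * \<bar>poch_quot n x\<bar>)
          \<le> \<bar>den_coeff k\<bar> / (real k + 1) * (2 * real n + 1) * 1"
        by (intro mult_left_mono) simp_all
      then show "norm (expansion_term x k n) \<le> \<bar>den_coeff k\<bar> / (real k + 1) * (2 * real n + 1)"
        by (simp add: expansion_term_def abs_mult abs_divide mult_ac)
    qed
    also have "\<dots> = \<bar>den_coeff k\<bar> * (real k + 1)"
      unfolding sum_distrib_left[symmetric] sum_odd_lessThan by (simp add: power2_eq_square)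
    finally show ?thesis .
  qed
  have "(\<lambda>k. norm (\<bar>den_coeff k\<bar> * (real k + 1))) summable_on UNIV"
    using summable_den_coeff_weighted by (intro norm_summable_imp_summable_on) (simp add: abs_mult)
  then have "(\<lambda>k. norm (infsum (\<lambda>n. norm (expansion_term x k n)) UNIV)) summable_on UNIV"
    by (rule Infinite_Sum.abs_summable_on_comparison_test)
       (use row_bound infsumI[OF row] in \<open>simp add: abs_mult\<close>)
  moreover have "(\<lambda>n. norm (expansion_term x k n)) summable_on UNIV" for k
    using row by (rule has_sum_imp_summable)
  ultimately have "(\<lambda>p. norm (case p of (k, n) \<Rightarrow> expansion_term x k n)) summable_on UNIV \<times> UNIV"
    using Infinite_Sum.abs_summable_on_Sigma_iff[of "\<lambda>(k, n). expansion_term x k n" UNIV "\<lambda>_. UNIV"] by simp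
  then show ?thesis
    by (rule abs_summable_summable)
qed

lemma den_series_expansion:
  assumes x: "x > -1"
  shows "den_series (x + 1) = infsum (\<lambda>n. expansion_coeff n * poch_quot n x) UNIV"
proof -
  have "summable (\<lambda>k. norm (den_coeff k * ((x + 1) / (x + 1 + real k))))"
    using summable_den_terms[of "x + 1"] x by simp
  then have "den_series (x + 1) = infsum (\<lambda>k. den_coeff k * ((x + 1) / (x + 1 + real k))) UNIV"
    unfolding den_series_def by (simp add: infsum_eq_suminf)
  also have "\<dots> = infsum (\<lambda>k. infsum (\<lambda>n. expansion_term x k n) UNIV) UNIV"
    using infsumI[OF has_sum_expansion_term_row[OF x]] by simp
  also have "\<dots> = infsum (\<lambda>n. infsum (\<lambda>k. expansion_term x k n) UNIV) UNIV"
    by (rule infsum_swap_banach[OF summable_on_expansion_term[OF x]])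
  also have "\<dots> = infsum (\<lambda>n. expansion_coeff n * poch_quot n x) UNIV"
  proof -
    have "expansion_term x k n = den_coeff k * (2 * real n + 1) * poch_quot n (real k) / (real k + 1) * poch_quot n x"
      for k n
      by (simp add: expansion_term_def)
    then show ?thesis
      by (simp only: infsum_cmult_left' expansion_coeff_def)
  qed
  finally show ?thesis .
qed

lemma den_series_of_nat: "den_series (real m + 1) = (\<Sum>n<Suc m. expansion_coeff n * poch_quot n (real m))"
  using den_series_expansion[of "real m"]
    infsumI[OF has_sum_vanishing_beyond[of "Suc m" "\<lambda>n. expansion_coeff n * poch_quot n (real m)"]]
  by (simp add: poch_quot_of_nat_eq_0)

lemma num_series_eq_den_series_of_nat: "num_series (real m) = 15 * pi / 32 * den_series (real m + 1)"
proof (induction m)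
  case 0
  have "5/4 * den_series 1 = 8 / (3 * pi)"
    using den_series_recurrence[of 0] by simp
  then show ?case
    using num_series_of_nat[of 0] by (simp add: num_coeff_def field_simps)
next
  case (Suc m)
  define c where "c = (real m + 7/2) * (real m + 3/2)"
  have "c > 0"
    by (simp add: c_def)
  have "c * num_series (real m + 1) = (real m + 1) * (real m + 2) * num_series (real m) + 5/4 * (real m + 2)"
    using num_series_recurrence[of "real m"] by (simp add: c_def)
  also have "\<dots> = 15 * pi / 32 * ((real m + 1) * (real m + 2) * den_series (real m + 1) + 8 * (real m + 2) / (3 * pi))"
    by (simp add: Suc.IH field_simps)
  also have "\<dots> = 15 * pi / 32 * (c * den_series (real m + 1 + 1))"
    using den_series_recurrence[of "real m + 1"] by (simp add: c_def algebra_simps)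
  finally show ?case
    using \<open>c > 0\<close> by (simp add: add_ac)
qed

lemma num_coeff_eq_expansion_coeff: "num_coeff n = 15 * pi / 32 * expansion_coeff n"
proof (induction n rule: less_induct)
  case (less n)
  define c where "c = 15 * pi / 32"
  have "(\<Sum>j<Suc n. num_coeff j * poch_quot j (real n)) = c * (\<Sum>j<Suc n. expansion_coeff j * poch_quot j (real n))"
    using num_series_eq_den_series_of_nat[of n] unfolding c_def num_series_of_nat den_series_of_nat .
  moreover have "(\<Sum>j<n. num_coeff j * poch_quot j (real n)) = c * (\<Sum>j<n. expansion_coeff j * poch_quot j (real n))"
    unfolding sum_distrib_left by (rule sum.cong) (simp_all add: less.IH c_def)
  ultimately have "num_coeff n * poch_quot n (real n) = c * expansion_coeff n * poch_quot n (real n)"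
    by (simp add: distrib_left)
  then show ?case
    using poch_quot_of_nat_self_ne_0[of n] by (simp add: c_def)
qed

lemma num_series_eq_den_series:
  assumes x: "x > -1"
  shows "num_series x = 15 * pi / 32 * den_series (x + 1)"
proof -
  have "num_series x = infsum (\<lambda>n. num_coeff n * poch_quot n x) UNIV"
    unfolding num_series_def using summable_num_terms[OF x] by (simp add: infsum_eq_suminf)
  also have "\<dots> = infsum (\<lambda>n. 15 * pi / 32 * (expansion_coeff n * poch_quot n x)) UNIV"
    by (simp only: num_coeff_eq_expansion_coeff mult.assoc)
  also have "\<dots> = 15 * pi / 32 * infsum (\<lambda>n. expansion_coeff n * poch_quot n x) UNIV"
    by (rule infsum_cmult_right')
  finally show ?thesis
    by (simp add: den_series_expansion[OF x])
qed

theorem mainTheorem15: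
  fixes \<eta> :: real
  assumes "\<eta> > -1"
  shows "15 * pi / 32 =
    hypergeom [-3/2, 1, -\<eta>] [7/2, 2 + \<eta>] (-1) /
    hypergeom [-3/2, 1/2, 1 + \<eta>] [1, 2 + \<eta>] 1"
proof -
  have "den_series (\<eta> + 1) \<noteq> 0"
    using den_series_pos[of "\<eta> + 1"] assms by simp
  then show ?thesis
    unfolding hypergeom_eq_num_series[OF assms] hypergeom_eq_den_series[OF assms]
      num_series_eq_den_series[OF assms] by simp
qed

end
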